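(* Let $\Lambda\in\mathcal H$ be of integral type and $\tilde\Lambda\in\mathcal H$ of $\Lambda$-integral type. Consider ${}_{\tilde\Lambda}\mathcal V$ as a right module over the algebra $\mathcal V_{\tilde\Lambda}$ via $x\cdot a=S(\pi(a))x$. Then ${}_{\tilde\Lambda}\mathcal V$ is a cyclic $\mathcal V_{\tilde\Lambda}$-module if and only if $1_{\mathcal H}\in\mathcal V_{\tilde\Lambda}$ and $\mathcal V_{\tilde\Lambda}$ is a Frobenius algebra.
   Context: $k$ is a field; $\mathcal H$ is a Hopf algebra over $k$ with comultiplication $\Delta$, counit $\varepsilon$, invertible antipode $S$, dual $\mathcal H'$. For $\Lambda\in\mathcal H$ put $\mathcal V_\Lambda=\{(\nu\otimes\mathrm{id})\Delta(\Lambda):\nu\in\mathcal H'\}$ and ${}_\Lambda\mathcal V=\{(\mathrm{id}\otimes\nu)\Delta(\Lambda):\nu\in\mathcal H'\}$. A non-zero $\Lambda$ is of integral type if $\Delta(\Lambda)(1\otimes\Lambda)=\Lambda\otimes\Lambda$; for such $\Lambda$, a non-zero $\tilde\Lambda$ is of $\Lambda$-integral type if $\Delta(\tilde\Lambda)(1\otimes\tilde\Lambda)=\Lambda\otimes\tilde\Lambda$. $\mathcal A_{\tilde\Lambda}=\{a\in\mathcal H:\ \Delta(a)(1\otimes\tilde\Lambda)=b\otimes\tilde\Lambda\text{ for some }b\}$; $b$ is unique, denoted $\pi(a)$, and $\pi:\mathcal A_{\tilde\Lambda}\to\mathcal H$ is an injective algebra homomorphism; $\mathcal V_{\tilde\Lambda}$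 is a subalgebra of $\mathcal A_{\tilde\Lambda}$. A right module $M$ over an algebra $\mathcal B$ is cyclic if there is $m\in M$ with $m\mathcal B=M$. A finite-dimensional unital algebra $\mathcal B$ is Frobenius if it admits a non-degenerate bilinear form $\sigma$ with $\sigma(ab,c)=\sigma(a,bc)$ for all $a,b,c$ (equivalently, it admits a faithful functional $\omega$, i.e. $\omega(ab)=0$ for all $b$ implies $a=0$). *)

theory Defs
  imports Complex_Main
begin

text \<open>An element of H \<otimes> H is represented by a finite list of simple tensors
  [(x1,y1),...,(xn,yn)] standing for the sum of the xi \<otimes> yi; two such
  representatives denote the same tensor iff they agree under every bilinear form
  H \<times> H \<rightarrow> k (universal property of the tensor product, with target k, which
  separates points of H \<otimes> H over a field).  Similarly for H \<otimes> H \<otimes> H.\<close>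

definition bilinear_form :: "('k::field \<Rightarrow> 'h::ring_1 \<Rightarrow> 'h) \<Rightarrow> ('h \<Rightarrow> 'h \<Rightarrow> 'k) \<Rightarrow> bool" where
  "bilinear_form sc B \<longleftrightarrow>
     (\<forall>y. Vector_Spaces.linear sc (*) (\<lambda>x. B x y)) \<and> (\<forall>x. Vector_Spaces.linear sc (*) (B x))"

definition trilinear_form :: "('k::field \<Rightarrow> 'h::ring_1 \<Rightarrow> 'h) \<Rightarrow> ('h \<Rightarrow> 'h \<Rightarrow> 'h \<Rightarrow> 'k) \<Rightarrow> bool" where
  "trilinear_form sc T \<longleftrightarrow>
     (\<forall>y z. Vector_Spaces.linear sc (*) (\<lambda>x. T x y z)) \<and>
     (\<forall>x z. Vector_Spaces.linear sc (*) (\<lambda>y. T x y z)) \<and>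
     (\<forall>x y. Vector_Spaces.linear sc (*) (\<lambda>z. T x y z))"

definition tens_eq :: "('k::field \<Rightarrow> 'h::ring_1 \<Rightarrow> 'h) \<Rightarrow> ('h \<times> 'h) list \<Rightarrow> ('h \<times> 'h) list \<Rightarrow> bool" where
  "tens_eq sc t u \<longleftrightarrow>
     (\<forall>B. bilinear_form sc B \<longrightarrow> (\<Sum>(x,y)\<leftarrow>t. B x y) = (\<Sum>(x,y)\<leftarrow>u. B x y))"

definition tens3_eq :: "('k::field \<Rightarrow> 'h::ring_1 \<Rightarrow> 'h) \<Rightarrow> ('h \<times> 'h \<times> 'h) list \<Rightarrow> ('h \<times> 'h \<times> 'h) list \<Rightarrow> bool" where
  "tens3_eq sc t u \<longleftrightarrow>
     (\<forall>T. trilinear_form sc T \<longrightarrow> (\<Sum>(x,y,z)\<leftarrow>t. T x y z) = (\<Sum>(x,y,z)\<leftarrow>u. T x y z))"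

definition tens_mult :: "('h::ring_1 \<times> 'h) list \<Rightarrow> ('h \<times> 'h) list \<Rightarrow> ('h \<times> 'h) list" where
  "tens_mult t u = [(x * x', y * y'). (x, y) \<leftarrow> t, (x', y') \<leftarrow> u]"

definition slice_left :: "('k::field \<Rightarrow> 'h::ring_1 \<Rightarrow> 'h) \<Rightarrow> ('h \<Rightarrow> 'k) \<Rightarrow> ('h \<times> 'h) list \<Rightarrow> 'h" where
  "slice_left sc \<nu> t = (\<Sum>(x,y)\<leftarrow>t. sc (\<nu> x) y)"

definition slice_right :: "('k::field \<Rightarrow> 'h::ring_1 \<Rightarrow> 'h) \<Rightarrow> ('h \<Rightarrow> 'k) \<Rightarrow> ('h \<times> 'h) list \<Rightarrow> 'h" where
  "slice_right sc \<nu> t = (\<Sum>(x,y)\<leftarrow>t. sc (\<nu> y) x)"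

definition dual_space :: "('k::field \<Rightarrow> 'h::ring_1 \<Rightarrow> 'h) \<Rightarrow> ('h \<Rightarrow> 'k) set" where
  "dual_space sc = {\<nu>. Vector_Spaces.linear sc (*) \<nu>}"

locale hopf_algebra =
  fixes sc :: "'k::field \<Rightarrow> 'h::ring_1 \<Rightarrow> 'h"
    and D :: "'h \<Rightarrow> ('h \<times> 'h) list"
    and eps :: "'h \<Rightarrow> 'k"
    and S :: "'h \<Rightarrow> 'h"
  assumes vs: "vector_space sc"
    and alg_left: "\<And>c a b. sc c (a * b) = sc c a * b"
    and alg_right: "\<And>c a b. sc c (a * b) = a * sc c b"
    and D_add: "\<And>a b. tens_eq sc (D (a + b)) (D a @ D b)"
    and D_scale: "\<And>c a. tens_eq sc (D (sc c a)) (map (\<lambda>(x,y). (sc c x, y)) (D a))"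
    and D_mult: "\<And>a b. tens_eq sc (D (a * b)) (tens_mult (D a) (D b))"
    and D_one: "tens_eq sc (D 1) [(1, 1)]"
    and coassoc: "\<And>a. tens3_eq sc
        [(u, v, y). (x, y) \<leftarrow> D a, (u, v) \<leftarrow> D x]
        [(x, u, v). (x, y) \<leftarrow> D a, (u, v) \<leftarrow> D y]"
    and eps_linear: "Vector_Spaces.linear sc (*) eps"
    and counit_left: "\<And>a. (\<Sum>(x,y)\<leftarrow>D a. sc (eps x) y) = a"
    and counit_right: "\<And>a. (\<Sum>(x,y)\<leftarrow>D a. sc (eps y) x) = a"
    and eps_mult: "\<And>a b. eps (a * b) = eps a * eps b"
    and eps_one: "eps 1 = 1"
    and S_linear: "Vector_Spaces.linear sc sc S"
    and antipode_left: "\<And>a. (\<Sum>(x,y)\<leftarrow>D a. S x * y) = sc (eps a) 1"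
    and antipode_right: "\<And>a. (\<Sum>(x,y)\<leftarrow>D a. x * S y) = sc (eps a) 1"
    and S_invertible: "bij S"

definition integral_type :: "('k::field \<Rightarrow> 'h::ring_1 \<Rightarrow> 'h) \<Rightarrow> ('h \<Rightarrow> ('h \<times> 'h) list) \<Rightarrow> 'h \<Rightarrow> bool" where
  "integral_type sc D L \<longleftrightarrow> L \<noteq> 0 \<and> tens_eq sc (tens_mult (D L) [(1, L)]) [(L, L)]"

definition Lambda_integral_type ::
  "('k::field \<Rightarrow> 'h::ring_1 \<Rightarrow> 'h) \<Rightarrow> ('h \<Rightarrow> ('h \<times> 'h) list) \<Rightarrow> 'h \<Rightarrow> 'h \<Rightarrow> bool" where
  "Lambda_integral_type sc D L Lt \<longleftrightarrow> Lt \<noteq> 0 \<and> tens_eq sc (tens_mult (D Lt) [(1, Lt)]) [(L, Lt)]"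

definition A_set :: "('k::field \<Rightarrow> 'h::ring_1 \<Rightarrow> 'h) \<Rightarrow> ('h \<Rightarrow> ('h \<times> 'h) list) \<Rightarrow> 'h \<Rightarrow> 'h set" where
  "A_set sc D Lt = {a. \<exists>b. tens_eq sc (tens_mult (D a) [(1, Lt)]) [(b, Lt)]}"

definition hpi :: "('k::field \<Rightarrow> 'h::ring_1 \<Rightarrow> 'h) \<Rightarrow> ('h \<Rightarrow> ('h \<times> 'h) list) \<Rightarrow> 'h \<Rightarrow> 'h \<Rightarrow> 'h" where
  "hpi sc D Lt a = (THE b. tens_eq sc (tens_mult (D a) [(1, Lt)]) [(b, Lt)])"

text \<open>V_{Lt} = {(\<nu> \<otimes> id) D(Lt)} and _{Lt}V = {(id \<otimes> \<nu>) D(Lt)}.\<close>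
definition V_right :: "('k::field \<Rightarrow> 'h::ring_1 \<Rightarrow> 'h) \<Rightarrow> ('h \<Rightarrow> ('h \<times> 'h) list) \<Rightarrow> 'h \<Rightarrow> 'h set" where
  "V_right sc D Lt = {slice_left sc \<nu> (D Lt) | \<nu>. \<nu> \<in> dual_space sc}"

definition V_left :: "('k::field \<Rightarrow> 'h::ring_1 \<Rightarrow> 'h) \<Rightarrow> ('h \<Rightarrow> ('h \<times> 'h) list) \<Rightarrow> 'h \<Rightarrow> 'h set" where
  "V_left sc D Lt = {slice_right sc \<nu> (D Lt) | \<nu>. \<nu> \<in> dual_space sc}"

definition cyclic_module :: "'m set \<Rightarrow> 'b set \<Rightarrow> ('m \<Rightarrow> 'b \<Rightarrow> 'm) \<Rightarrow> bool" where
  "cyclic_module M B act \<longleftrightarrow> (\<exists>m \<in> M. {act m b | b. b \<in> B} = M)"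

definition frobenius :: "('k::field \<Rightarrow> 'h::ring_1 \<Rightarrow> 'h) \<Rightarrow> 'h set \<Rightarrow> bool" where
  "frobenius sc B \<longleftrightarrow>
     module.subspace sc B \<and> (\<forall>a\<in>B. \<forall>b\<in>B. a * b \<in> B) \<and>
     (\<exists>e\<in>B. \<forall>a\<in>B. e * a = a \<and> a * e = a) \<and>
     (\<exists>F. finite F \<and> F \<subseteq> B \<and> module.span sc F = B) \<and>
     (\<exists>\<sigma> :: 'h \<Rightarrow> 'h \<Rightarrow> 'k.
        (\<forall>x\<in>B. \<forall>y\<in>B. \<forall>z\<in>B. \<forall>c.
            \<sigma> (x + y) z = \<sigma> x z + \<sigma> y z \<and> \<sigma> (sc c x) z = c * \<sigma> x z \<and>
            \<sigma> x (y + z) = \<sigma> x y + \<sigma> x z \<and> \<sigma> x (sc c y) = c * \<sigma> x y) \<and>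
        (\<forall>a\<in>B. (\<forall>b\<in>B. \<sigma> a b = 0) \<longrightarrow> a = 0) \<and>
        (\<forall>b\<in>B. (\<forall>a\<in>B. \<sigma> a b = 0) \<longrightarrow> b = 0) \<and>
        (\<forall>a\<in>B. \<forall>b\<in>B. \<forall>c\<in>B. \<sigma> (a * b) c = \<sigma> a (b * c)))"

end

theory Submission
  imports Defs
begin

text \<open>Testing the dual pairing \<mu>(\<Phi> \<phi>) = \<phi>(\<Psi> \<mu>) of V_left = {\<Phi> \<phi>} against V_right = {\<Psi> \<nu>}
  identifies V_left with the dual of V_right. The Lambda-integral relation, coassociativity and the
  antipode axiom give (S(\<pi>(\<Psi> \<nu>)) \<otimes> 1) \<Delta>(Lt) = (1 \<otimes> \<Psi> \<nu>) \<Delta>(Lt), so under this identification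
  the action x \<cdot> a = S(\<pi> a) x becomes (\<phi> \<cdot> a)(b) = \<phi>(a b). Hence V_left is cyclic iff some functional
  \<phi> makes a \<mapsto> \<phi>(a \<cdot> _) surjective onto the dual of V_right; since V_right is a finite-dimensional
  subalgebra, surjectivity is equivalent to injectivity, i.e. to \<sigma>(a, b) = \<phi>(a b) being a
  Frobenius form. Finally a right unit e of V_right equals 1: the right legs of \<Delta>(Lt) lie in
  V_right, and pairing with a functional g with g(Lt) = 1 yields \<mu>(e) = \<mu>(1) for every \<mu>.\<close>

lemma sum_list_concat: "sum_list (concat xss) = sum_list (map sum_list xss)"
  by (induct xss) simp_all

lemma sum_list_sum_swap: "(\<Sum>p\<leftarrow>t. \<Sum>u\<in>A. f p u) = (\<Sum>u\<in>A. \<Sum>p\<leftarrow>t. f p u)"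
  by (induct t) (simp_all add: sum.distrib)

lemma tens_mult_single: "tens_mult t [(1, z)] = map (\<lambda>(x, y). (x, y * z)) t"
  by (induct t) (auto simp: tens_mult_def)

lemma vector_space_field_mult: "vector_space ((*) :: 'a::field \<Rightarrow> 'a \<Rightarrow> 'a)"
  by unfold_locales (auto simp: algebra_simps)

locale vector_space_duality = vector_space scale
  for scale :: "'a::field \<Rightarrow> 'b::ab_group_add \<Rightarrow> 'b"
begin

sublocale endo: vector_space_pair scale scale ..

sublocale dual: vector_space_pair scale "(*) :: 'a \<Rightarrow> 'a \<Rightarrow> 'a"
  using vector_space_axioms vector_space_field_mult by (rule vector_space_pair.intro)

abbreviation linear_functional :: "('b \<Rightarrow> 'a) \<Rightarrow> bool" where
  "linear_functional \<nu> \<equiv> Vector_Spaces.linear scale (*) \<nu>"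

lemma linear_functionalI:
  "(\<And>x y. \<nu> (x + y) = \<nu> x + \<nu> y) \<Longrightarrow> (\<And>c x. \<nu> (scale c x) = c * \<nu> x) \<Longrightarrow> linear_functional \<nu>"
  using vector_space_axioms vector_space_field_mult by (simp add: Vector_Spaces.linear_iff)

lemma linear_functional_sum_list:
  "linear_functional \<nu> \<Longrightarrow> \<nu> (\<Sum>p\<leftarrow>t. f p) = (\<Sum>p\<leftarrow>t. \<nu> (f p))"
  by (induct t) (simp_all add: dual.linear_add dual.linear_0)

lemma linear_functional_const_mult:
  assumes "linear_functional f" shows "linear_functional (\<lambda>x. c * f x)"
  by (rule linear_functionalI)
    (simp_all only: dual.linear_add[OF assms] dual.linear_scale[OF assms] distrib_left mult.left_commute)

lemma linear_functional_mult_const: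
  assumes "linear_functional f" shows "linear_functional (\<lambda>x. f x * c)"
  by (rule linear_functionalI)
    (simp_all only: dual.linear_add[OF assms] dual.linear_scale[OF assms] distrib_right mult.assoc)

lemma linear_functional_sum_pairs:
  assumes "\<And>u v. linear_functional (F u v)"
  shows "linear_functional (\<lambda>x. \<Sum>(u,v)\<leftarrow>t. F u v x)"
proof (rule linear_functionalI)
  show "(\<Sum>(u,v)\<leftarrow>t. F u v (x + y)) = (\<Sum>(u,v)\<leftarrow>t. F u v x) + (\<Sum>(u,v)\<leftarrow>t. F u v y)" for x y
    using assms by (simp add: dual.linear_add split_def sum_list_addf)
  show "(\<Sum>(u,v)\<leftarrow>t. F u v (scale c x)) = c * (\<Sum>(u,v)\<leftarrow>t. F u v x)" for c x
    using assms by (simp add: dual.linear_scale split_def sum_list_const_mult)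
qed

lemma exists_linear_functional_eq_one:
  assumes "x \<noteq> 0"
  obtains \<nu> where "linear_functional \<nu>" "\<nu> x = 1"
  using dual.linear_independent_extend[of "{x}" "\<lambda>_. 1"] assms by auto

lemma linear_functional_ext:
  assumes "\<And>\<nu>. linear_functional \<nu> \<Longrightarrow> \<nu> x = \<nu> y"
  shows "x = y"
proof (rule ccontr)
  assume "x \<noteq> y"
  then obtain \<nu> where "linear_functional \<nu>" "\<nu> (x - y) = 1"
    using exists_linear_functional_eq_one[of "x - y"] by auto
  with assms[of \<nu>] show False by (simp add: dual.linear_diff)
qed

lemma finite_basis_exists:
  assumes "subspace V" "V \<subseteq> span F" "finite F"
  obtains U where "finite U" "independent U" "U \<subseteq> V" "span U = V"
proof -
  obtain U where U: "U \<subseteq> V" "independent U" "V \<subseteq> span U"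
    using maximal_independent_subset[of V] by blast
  have "finite U" using independent_span_bound[OF assms(3) U(2)] U(1) assms(2) by blast
  moreover have "span U = V" using U assms(1) span_minimal by blast
  ultimately show ?thesis using U that by blast
qed

lemma span_eq_if_independent_card_eq:
  assumes "finite U" "independent W" "W \<subseteq> span U" "card W = card U"
  shows "span W = span U"
proof
  show "span W \<subseteq> span U" using span_mono[OF assms(3)] by (simp only: span_span)
  show "span U \<subseteq> span W"
  proof
    fix x assume x: "x \<in> span U"
    show "x \<in> span W"
    proof (rule ccontr)
      assume "x \<notin> span W"
      then have "x \<notin> W" and indep: "independent (insert x W)"
        using span_base[of x W] independent_insertI[OF _ assms(2)] by blast+
      have "insert x W \<subseteq> span U" using x assms(3) by blast
      then have "finite (insert x W) \<and> card (insert x W) \<le> card U"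
        by (rule independent_span_bound[OF assms(1) indep])
      with \<open>x \<notin> W\<close> assms(4) show False by (elim conjE) simp
    qed
  qed
qed

lemma linear_inj_on_span_imp_surj:
  assumes "finite U" "independent U" "Vector_Spaces.linear scale scale T"
    and "T ` span U \<subseteq> span U" "inj_on T (span U)"
  shows "span U \<subseteq> T ` span U"
proof -
  have "independent (T ` U)"
    using endo.linear_independent_injective_image assms(2,3,5) by blast
  moreover have "card (T ` U) = card U"
    using card_image inj_on_subset[OF assms(5) span_superset] by blast
  moreover have "T ` U \<subseteq> span U" using assms(4) span_superset by blast
  ultimately have "span (T ` U) = span U"
    using span_eq_if_independent_card_eq assms(1) by blast
  then show ?thesis using endo.linear_span_image[OF assms(3)] by simp
qed

lemma linear_inj_on_span_iff_surj:
  assumes "finite U" "independent U" "Vector_Spaces.linear scale scale T" "T ` span U \<subseteq> span U"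
  shows "inj_on T (span U) \<longleftrightarrow> span U \<subseteq> T ` span U"
proof
  assume "span U \<subseteq> T ` span U"
  then obtain g where g: "Vector_Spaces.linear scale scale g" "range g \<subseteq> span U"
    and Tg: "\<And>v. v \<in> span U \<Longrightarrow> T (g v) = v"
    using endo.linear_exists_right_inverse_on[OF assms(3) subspace_span, of U] by blast
  have "inj_on g (span U)" by (metis Tg inj_onI)
  then have surj_g: "span U \<subseteq> g ` span U"
    using linear_inj_on_span_imp_surj[OF assms(1,2) g(1)] g(2) by blast
  show "inj_on T (span U)"
  proof (rule inj_onI)
    fix x y assume "x \<in> span U" "y \<in> span U" "T x = T y"
    then obtain x' y' where "x' \<in> span U" "y' \<in> span U" "x = g x'" "y = g y'"
      using surj_g by blast
    with \<open>T x = T y\<close> Tg show "x = y" by metis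
  qed
qed (rule linear_inj_on_span_imp_surj[OF assms])

definition dual_basis :: "'b set \<Rightarrow> ('b \<Rightarrow> 'b \<Rightarrow> 'a) \<Rightarrow> bool" where
  "dual_basis U \<delta> \<longleftrightarrow> (\<forall>u\<in>U. linear_functional (\<delta> u) \<and> (\<forall>v\<in>U. \<delta> u v = (if v = u then 1 else 0)))"

lemma dual_basis_exists:
  assumes "independent U"
  obtains \<delta> where "dual_basis U \<delta>"
proof -
  have "\<exists>\<nu>. linear_functional \<nu> \<and> (\<forall>v\<in>U. \<nu> v = (if v = u then 1 else 0))" for u
    using dual.linear_independent_extend[OF assms, of "\<lambda>v. if v = u then 1 else 0"] by blast
  then obtain \<delta> where "\<And>u. linear_functional (\<delta> u) \<and> (\<forall>v\<in>U. \<delta> u v = (if v = u then 1 else 0))"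
    by metis
  then show ?thesis using that[of \<delta>] by (simp add: dual_basis_def)
qed

lemma dual_basis_coeff:
  assumes "finite U" "dual_basis U \<delta>" "w \<in> U"
  shows "\<delta> w (\<Sum>v\<in>U. scale (c v) v) = c w"
proof -
  have "\<delta> w (\<Sum>v\<in>U. scale (c v) v) = (\<Sum>v\<in>U. c v * \<delta> w v)"
    using assms(2,3) by (simp add: dual_basis_def dual.linear_sum dual.linear_scale)
  also have "\<dots> = (\<Sum>v\<in>U. if v = w then c v else 0)"
    using assms(2,3) by (intro sum.cong) (auto simp: dual_basis_def)
  finally show ?thesis using assms(1,3) by simp
qed

lemma dual_basis_expansion:
  assumes "finite U" "dual_basis U \<delta>" "x \<in> span U"
  shows "x = (\<Sum>v\<in>U. scale (\<delta> v x) v)"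
proof -
  obtain c where x: "x = (\<Sum>v\<in>U. scale (c v) v)"
    using assms(1,3) span_finite by auto
  then have "\<delta> v x = c v" if "v \<in> U" for v
    using dual_basis_coeff[OF assms(1,2) that] by simp
  then show ?thesis using x by simp
qed

lemma linear_functional_span_expansion:
  assumes "finite U" "dual_basis U \<delta>" "x \<in> span U" "linear_functional \<psi>"
  shows "\<psi> x = (\<Sum>v\<in>U. \<delta> v x * \<psi> v)"
  by (subst dual_basis_expansion[OF assms(1-3)]) (simp add: dual.linear_sum[OF assms(4)] dual.linear_scale[OF assms(4)])

lemma subspace_projection_exists:
  assumes "subspace V"
  obtains P where "Vector_Spaces.linear scale scale P" "\<And>x. P x \<in> V" "\<And>v. v \<in> V \<Longrightarrow> P v = v"
  using endo.linear_exists_left_inverse_on[OF linear_id assms] by auto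

definition represents_dual :: "'b set \<Rightarrow> ('b \<Rightarrow> 'b \<Rightarrow> 'a) \<Rightarrow> bool" where
  "represents_dual V \<beta> \<longleftrightarrow> (\<forall>\<psi>. linear_functional \<psi> \<longrightarrow> (\<exists>a\<in>V. \<forall>b\<in>V. \<beta> a b = \<psi> b))"

definition left_nondegenerate :: "'b set \<Rightarrow> ('b \<Rightarrow> 'b \<Rightarrow> 'a) \<Rightarrow> bool" where
  "left_nondegenerate V \<beta> \<longleftrightarrow> (\<forall>a\<in>V. (\<forall>b\<in>V. \<beta> a b = 0) \<longrightarrow> a = 0)"

lemma represents_dual_iff_left_nondegenerate:
  assumes U: "finite U" "independent U"
    and lin_left: "\<And>y. linear_functional (\<lambda>x. \<beta> x y)" and lin_right: "\<And>x. linear_functional (\<beta> x)"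
  shows "represents_dual (span U) \<beta> \<longleftrightarrow> left_nondegenerate (span U) \<beta>"
proof -
  obtain \<delta> where \<delta>: "dual_basis U \<delta>" using dual_basis_exists[OF U(2)] .
  \<comment> \<open>T a encodes the functional \<beta> a in the basis U: T is injective iff \<beta> is left nondegenerate
    and surjective iff \<beta> represents the dual, and these agree in finite dimension.\<close>
  define T where "T x = (\<Sum>v\<in>U. scale (\<beta> x v) v)" for x
  have T_linear: "Vector_Spaces.linear scale scale T"
    unfolding Vector_Spaces.linear_iff T_def
    by (simp add: vector_space_axioms dual.linear_add[OF lin_left] dual.linear_scale[OF lin_left]
        scale_left_distrib sum.distrib scale_sum_right)
  have T_span: "T ` span U \<subseteq> span U"
    unfolding T_def by (auto intro: span_sum span_scale span_base)
  have T_eq: "T a = t \<longleftrightarrow> (\<forall>v\<in>U. \<beta> a v = \<delta> v t)" if "t \<in> span U" for a t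
  proof
    assume "T a = t"
    then show "\<forall>v\<in>U. \<beta> a v = \<delta> v t"
      using dual_basis_coeff[OF U(1) \<delta>, of _ "\<beta> a"] by (simp add: T_def)
  next
    assume "\<forall>v\<in>U. \<beta> a v = \<delta> v t"
    then show "T a = t"
      unfolding T_def using dual_basis_expansion[OF U(1) \<delta> that] by simp
  qed
  have agree: "(\<forall>b\<in>span U. \<psi> b = \<chi> b) \<longleftrightarrow> (\<forall>v\<in>U. \<psi> v = \<chi> v)"
    if "linear_functional \<psi>" "linear_functional \<chi>" for \<psi> \<chi>
  proof
    assume "\<forall>b\<in>span U. \<psi> b = \<chi> b"
    then show "\<forall>v\<in>U. \<psi> v = \<chi> v" by (simp add: span_base)
  next
    assume eq: "\<forall>v\<in>U. \<psi> v = \<chi> v"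
    show "\<forall>b\<in>span U. \<psi> b = \<chi> b"
    proof
      fix b assume "b \<in> span U"
      then show "\<psi> b = \<chi> b" by (rule dual.linear_eq_on[OF that]) (simp add: eq)
    qed
  qed
  have "left_nondegenerate (span U) \<beta> \<longleftrightarrow> inj_on T (span U)"
  proof -
    have "\<delta> v 0 = 0" if "v \<in> U" for v
      using \<delta> that by (simp add: dual_basis_def dual.linear_0)
    then have "T a = 0 \<longleftrightarrow> (\<forall>b\<in>span U. \<beta> a b = 0)" for a
      using T_eq[OF span_zero, of a] agree[OF lin_right dual.linear_zero] by simp
    then show ?thesis
      unfolding left_nondegenerate_def endo.linear_inj_on_iff_eq_0[OF T_linear subspace_span] by blast
  qed
  moreover have "represents_dual (span U) \<beta> \<longleftrightarrow> span U \<subseteq> T ` span U"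
  proof
    assume rep: "represents_dual (span U) \<beta>"
    show "span U \<subseteq> T ` span U"
    proof
      fix t assume t: "t \<in> span U"
      obtain \<psi> where "linear_functional \<psi>" "\<forall>v\<in>U. \<psi> v = \<delta> v t"
        using dual.linear_independent_extend[OF U(2), of "\<lambda>v. \<delta> v t"] by blast
      with rep obtain a where a: "a \<in> span U" "\<forall>v\<in>U. \<beta> a v = \<delta> v t"
        unfolding represents_dual_def by (metis span_base)
      show "t \<in> T ` span U"
        by (rule rev_image_eqI[OF a(1)], rule sym) (simp add: T_eq[OF t] a(2))
    qed
  next
    assume surj: "span U \<subseteq> T ` span U"
    show "represents_dual (span U) \<beta>"
      unfolding represents_dual_def
    proof (intro allI impI)
      fix \<psi> assume \<psi>: "linear_functional \<psi>"
      define t where "t = (\<Sum>v\<in>U. scale (\<psi> v) v)"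
      have "t \<in> span U" unfolding t_def by (auto intro: span_sum span_scale span_base)
      with surj obtain a where a: "a \<in> span U" "T a = t" by blast
      then have "\<forall>v\<in>U. \<beta> a v = \<psi> v"
        using T_eq[OF \<open>t \<in> span U\<close>] dual_basis_coeff[OF U(1) \<delta>] by (simp add: t_def)
      with a(1) show "\<exists>a\<in>span U. \<forall>b\<in>span U. \<beta> a b = \<psi> b"
        using agree[OF lin_right \<psi>] by blast
    qed
  qed
  ultimately show ?thesis using linear_inj_on_span_iff_surj[OF U T_linear T_span] by simp
qed
end

locale algebra_over_field = vector_space_duality sc
  for sc :: "'k::field \<Rightarrow> 'h::ring_1 \<Rightarrow> 'h" +
  assumes scale_mult_left: "sc c (a * b) = sc c a * b"
    and scale_mult_right: "sc c (a * b) = a * sc c b"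
begin

lemma linear_functional_mult_right:
  assumes "linear_functional f" shows "linear_functional (\<lambda>x. f (x * c))"
  by (rule linear_functionalI)
    (simp_all only: distrib_right scale_mult_left[symmetric] dual.linear_add[OF assms] dual.linear_scale[OF assms])

lemma linear_functional_mult_left:
  assumes "linear_functional f" shows "linear_functional (\<lambda>x. f (c * x))"
  by (rule linear_functionalI)
    (simp_all only: distrib_left scale_mult_right[symmetric] dual.linear_add[OF assms] dual.linear_scale[OF assms])

lemma frobenius_if_represents_dual:
  assumes U: "finite U" "independent U"
    and mult: "\<And>a b. a \<in> span U \<Longrightarrow> b \<in> span U \<Longrightarrow> a * b \<in> span U"
    and \<phi>: "linear_functional \<phi>" and rep: "represents_dual (span U) (\<lambda>a b. \<phi> (a * b))"
  shows "frobenius sc (span U)"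
proof -
  have nondeg: "\<And>a. a \<in> span U \<Longrightarrow> \<forall>b\<in>span U. \<phi> (a * b) = 0 \<Longrightarrow> a = 0"
    using rep represents_dual_iff_left_nondegenerate[OF U, of "\<lambda>a b. \<phi> (a * b)"]
      linear_functional_mult_right[OF \<phi>] linear_functional_mult_left[OF \<phi>]
    unfolding left_nondegenerate_def by blast
  obtain e where e: "e \<in> span U" "\<And>b. b \<in> span U \<Longrightarrow> \<phi> (e * b) = \<phi> b"
    using rep \<phi> unfolding represents_dual_def by blast
  have left_unit: "e * b = b" if b: "b \<in> span U" for b
  proof -
    have "\<forall>c\<in>span U. \<phi> ((e * b - b) * c) = 0"
      using e(2) mult b by (simp add: left_diff_distrib mult.assoc dual.linear_diff[OF \<phi>])
    with span_diff[OF mult[OF e(1) b] b] have "e * b - b = 0" by (rule nondeg)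
    then show ?thesis by simp
  qed
  have right_unit: "b * e = b" if b: "b \<in> span U" for b
  proof -
    have "\<forall>c\<in>span U. \<phi> ((b * e - b) * c) = 0"
      using left_unit by (simp add: left_diff_distrib mult.assoc dual.linear_diff[OF \<phi>] dual.linear_0[OF \<phi>])
    with span_diff[OF mult[OF b e(1)] b] have "b * e - b = 0" by (rule nondeg)
    then show ?thesis by simp
  qed
  have right_nondeg: "b = 0" if b: "b \<in> span U" "\<forall>a\<in>span U. \<phi> (a * b) = 0" for b
  proof (rule ccontr)
    assume "b \<noteq> 0"
    then obtain \<psi> where "linear_functional \<psi>" "\<psi> b = 1"
      by (rule exists_linear_functional_eq_one)
    with rep b(1) obtain a where "a \<in> span U" "\<phi> (a * b) = 1"
      unfolding represents_dual_def by metis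
    with b(2) show False by simp
  qed
  show ?thesis
    unfolding frobenius_def
  proof (intro conjI)
    show "\<exists>e\<in>span U. \<forall>a\<in>span U. e * a = a \<and> a * e = a"
      using e(1) left_unit right_unit by blast
    show "subspace (span U)" by (rule subspace_span)
    show "\<forall>a\<in>span U. \<forall>b\<in>span U. a * b \<in> span U" using mult by blast
    show "\<exists>F. finite F \<and> F \<subseteq> span U \<and> span F = span U" using U(1) span_superset by blast
  qed (use nondeg right_nondeg in \<open>intro exI[of _ "\<lambda>a b. \<phi> (a * b)"], simp add: distrib_left distrib_right
      scale_mult_left[symmetric] scale_mult_right[symmetric] mult.assoc dual.linear_add[OF \<phi>]
      dual.linear_scale[OF \<phi>]\<close>)
qed

lemma represents_dual_if_frobenius:
  assumes "frobenius sc B"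
  obtains \<phi> where "linear_functional \<phi>" "represents_dual B (\<lambda>a b. \<phi> (a * b))"
proof -
  have B: "subspace B" and mult: "\<And>a b. a \<in> B \<Longrightarrow> b \<in> B \<Longrightarrow> a * b \<in> B"
    using assms by (simp_all add: frobenius_def)
  obtain F where F: "finite F" "span F = B"
    using assms unfolding frobenius_def by blast
  obtain e where e: "e \<in> B" "\<forall>a\<in>B. e * a = a \<and> a * e = a"
    using assms unfolding frobenius_def by blast
  obtain \<sigma> where bilin: "\<forall>x\<in>B. \<forall>y\<in>B. \<forall>z\<in>B. \<forall>c.
        \<sigma> (x + y) z = \<sigma> x z + \<sigma> y z \<and> \<sigma> (sc c x) z = c * \<sigma> x z \<and>
        \<sigma> x (y + z) = \<sigma> x y + \<sigma> x z \<and> \<sigma> x (sc c y) = c * \<sigma> x y"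
    and nondeg: "\<forall>a\<in>B. (\<forall>b\<in>B. \<sigma> a b = 0) \<longrightarrow> a = 0"
    and assoc: "\<forall>a\<in>B. \<forall>b\<in>B. \<forall>c\<in>B. \<sigma> (a * b) c = \<sigma> a (b * c)"
    using assms unfolding frobenius_def by blast
  have \<sigma>_add: "\<sigma> (x + y) z = \<sigma> x z + \<sigma> y z" "\<sigma> z (x + y) = \<sigma> z x + \<sigma> z y"
    if "x \<in> B" "y \<in> B" "z \<in> B" for x y z
    using bilin that by auto
  have \<sigma>_scale: "\<sigma> (sc c x) z = c * \<sigma> x z" "\<sigma> z (sc c x) = c * \<sigma> z x"
    if "x \<in> B" "z \<in> B" for x z c
    using bilin that by auto
  obtain U where U: "finite U" "independent U" "span U = B"
    using finite_basis_exists[OF B] F by (metis order_refl)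
  obtain P where P: "Vector_Spaces.linear sc sc P" "\<And>x. P x \<in> B" "\<And>v. v \<in> B \<Longrightarrow> P v = v"
    using subspace_projection_exists[OF B] by blast
  \<comment> \<open>\<sigma> is only bilinear on B; a projection onto B extends it to the whole space.\<close>
  define \<beta> where "\<beta> x y = \<sigma> (P x) (P y)" for x y
  have lin_left: "linear_functional (\<lambda>x. \<beta> x y)" for y
    by (rule linear_functionalI) (simp_all add: \<beta>_def endo.linear_add[OF P(1)] endo.linear_scale[OF P(1)] \<sigma>_add \<sigma>_scale P(2))
  have lin_right: "linear_functional (\<beta> x)" for x
    by (rule linear_functionalI) (simp_all add: \<beta>_def endo.linear_add[OF P(1)] endo.linear_scale[OF P(1)] \<sigma>_add \<sigma>_scale P(2))
  have "left_nondegenerate B \<beta>"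
    using nondeg by (simp add: left_nondegenerate_def \<beta>_def P(3))
  then have rep: "represents_dual B \<beta>"
    using represents_dual_iff_left_nondegenerate[OF U(1,2) lin_left lin_right] U(3) by simp
  define \<phi> where "\<phi> x = \<beta> x e" for x
  have "represents_dual B (\<lambda>a b. \<phi> (a * b))"
    unfolding represents_dual_def
  proof (intro allI impI)
    fix \<psi> assume "linear_functional \<psi>"
    then obtain a where a: "a \<in> B" "\<forall>b\<in>B. \<beta> a b = \<psi> b"
      using rep unfolding represents_dual_def by blast
    have "\<phi> (a * b) = \<psi> b" if b: "b \<in> B" for b
    proof -
      have "\<phi> (a * b) = \<sigma> (a * b) e" by (simp add: \<phi>_def \<beta>_def P(3) mult a(1) b e(1))
      also have "\<dots> = \<sigma> a b" using assoc a(1) b e by simp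
      also have "\<dots> = \<psi> b" using a b by (simp add: \<beta>_def P(3))
      finally show ?thesis .
    qed
    with a(1) show "\<exists>a\<in>B. \<forall>b\<in>B. \<phi> (a * b) = \<psi> b" by blast
  qed
  moreover have "linear_functional \<phi>" unfolding \<phi>_def by (rule lin_left)
  ultimately show ?thesis using that by blast
qed

lemma frobenius_iff_represents_dual:
  assumes "finite U" "independent U" "\<And>a b. a \<in> span U \<Longrightarrow> b \<in> span U \<Longrightarrow> a * b \<in> span U"
  shows "frobenius sc (span U) \<longleftrightarrow> (\<exists>\<phi>. linear_functional \<phi> \<and> represents_dual (span U) (\<lambda>a b. \<phi> (a * b)))"
proof
  assume "frobenius sc (span U)"
  then obtain \<phi> where "linear_functional \<phi>" "represents_dual (span U) (\<lambda>a b. \<phi> (a * b))"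
    by (rule represents_dual_if_frobenius)
  then show "\<exists>\<phi>. linear_functional \<phi> \<and> represents_dual (span U) (\<lambda>a b. \<phi> (a * b))" by blast
next
  assume "\<exists>\<phi>. linear_functional \<phi> \<and> represents_dual (span U) (\<lambda>a b. \<phi> (a * b))"
  then show "frobenius sc (span U)" using frobenius_if_represents_dual[OF assms] by blast
qed

lemma linear_functional_slice_left:
  assumes "linear_functional \<mu>"
  shows "\<mu> (slice_left sc \<nu> t) = (\<Sum>(x,y)\<leftarrow>t. \<nu> x * \<mu> y)"
  by (simp add: slice_left_def split_def linear_functional_sum_list[OF assms] dual.linear_scale[OF assms])

lemma linear_functional_slice_right:
  assumes "linear_functional \<mu>"
  shows "\<mu> (slice_right sc \<phi> t) = (\<Sum>(x,y)\<leftarrow>t. \<phi> y * \<mu> x)"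
  by (simp add: slice_right_def split_def linear_functional_sum_list[OF assms] dual.linear_scale[OF assms])

lemma slice_left_add: "slice_left sc (\<lambda>x. \<nu> x + \<nu>' x) t = slice_left sc \<nu> t + slice_left sc \<nu>' t"
  by (simp add: slice_left_def split_def scale_left_distrib sum_list_addf)

lemma slice_left_scale: "slice_left sc (\<lambda>x. c * \<nu> x) t = sc c (slice_left sc \<nu> t)"
  by (induct t) (simp_all add: slice_left_def split_def scale_right_distrib)

lemma slice_left_in_span: "slice_left sc \<nu> t \<in> span (snd ` set t)"
  unfolding slice_left_def split_def
  by (induct t) (auto intro: span_add span_scale span_base span_mono[THEN subsetD, rotated])

end

sublocale hopf_algebra \<subseteq> algebra_over_field sc
  by (rule algebra_over_field.intro, unfold vector_space_duality_def, fact vs)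
    (unfold_locales, fact alg_left, fact alg_right)

context hopf_algebra
begin

lemma bilinear_formI:
  "(\<And>y. linear_functional (\<lambda>x. \<beta> x y)) \<Longrightarrow> (\<And>x. linear_functional (\<beta> x)) \<Longrightarrow> bilinear_form sc \<beta>"
  by (simp add: bilinear_form_def)

lemma bilinear_form_linear_left: "bilinear_form sc \<beta> \<Longrightarrow> linear_functional (\<lambda>x. \<beta> x y)"
  by (simp add: bilinear_form_def)

lemma bilinear_form_linear_right: "bilinear_form sc \<beta> \<Longrightarrow> linear_functional (\<beta> x)"
  by (simp add: bilinear_form_def)

lemma bilinear_form_mult:
  "linear_functional f \<Longrightarrow> linear_functional g \<Longrightarrow> bilinear_form sc (\<lambda>x y. f x * g y)"
  by (intro bilinear_formI linear_functional_mult_const linear_functional_const_mult)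

lemma trilinear_formI:
  "(\<And>y z. linear_functional (\<lambda>x. T x y z)) \<Longrightarrow> (\<And>x z. linear_functional (\<lambda>y. T x y z)) \<Longrightarrow>
    (\<And>x y. linear_functional (\<lambda>z. T x y z)) \<Longrightarrow> trilinear_form sc T"
  by (simp add: trilinear_form_def)

lemma linear_functional_antipode:
  assumes "linear_functional f" shows "linear_functional (\<lambda>x. f (S x))"
  using Vector_Spaces.linear_compose[OF S_linear assms] by (simp add: o_def)

lemma linear_functional_comult_sum:
  assumes \<beta>: "bilinear_form sc \<beta>"
  shows "linear_functional (\<lambda>a. \<Sum>(x,y)\<leftarrow>D a. \<beta> x y)"
proof (rule linear_functionalI)
  fix a b
  show "(\<Sum>(x,y)\<leftarrow>D (a + b). \<beta> x y) = (\<Sum>(x,y)\<leftarrow>D a. \<beta> x y) + (\<Sum>(x,y)\<leftarrow>D b. \<beta> x y)"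
    using D_add[of a b] \<beta> by (simp add: tens_eq_def)
next
  fix c a
  have "(\<Sum>(x,y)\<leftarrow>D (sc c a). \<beta> x y) = (\<Sum>(x,y)\<leftarrow>map (\<lambda>(x,y). (sc c x, y)) (D a). \<beta> x y)"
    using D_scale[of c a] \<beta> by (simp add: tens_eq_def)
  also have "\<dots> = c * (\<Sum>(x,y)\<leftarrow>D a. \<beta> x y)"
    by (simp add: o_def split_def sum_list_const_mult dual.linear_scale[OF bilinear_form_linear_left[OF \<beta>]])
  finally show "(\<Sum>(x,y)\<leftarrow>D (sc c a). \<beta> x y) = c * (\<Sum>(x,y)\<leftarrow>D a. \<beta> x y)" .
qed

lemma comult_sum_mult:
  "bilinear_form sc \<beta> \<Longrightarrow>
    (\<Sum>(x,y)\<leftarrow>D (a * b). \<beta> x y) = (\<Sum>(x,y)\<leftarrow>D a. \<Sum>(x',y')\<leftarrow>D b. \<beta> (x * x') (y * y'))"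
  using D_mult[of a b] by (simp add: tens_eq_def tens_mult_def map_concat sum_list_concat o_def split_def)

lemma comult_sum_coassoc:
  "trilinear_form sc T \<Longrightarrow>
    (\<Sum>(x,y)\<leftarrow>D a. \<Sum>(u,v)\<leftarrow>D x. T u v y) = (\<Sum>(x,y)\<leftarrow>D a. \<Sum>(u,v)\<leftarrow>D y. T x u v)"
  using coassoc[of a] by (simp add: tens3_eq_def map_concat sum_list_concat o_def split_def)

lemma comult_sum_antipode_left:
  assumes G: "bilinear_form sc G"
  shows "(\<Sum>(x,y)\<leftarrow>D a. \<Sum>(u,v)\<leftarrow>D y. G (S x * u) v) = G 1 a"
proof -
  note G_left = bilinear_form_linear_left[OF G] and G_right = bilinear_form_linear_right[OF G]
  have "trilinear_form sc (\<lambda>x u v. G (S x * u) v)"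
  proof (rule trilinear_formI)
    show "linear_functional (\<lambda>x. G (S x * u) v)" for u v
      by (rule linear_functional_antipode[OF linear_functional_mult_right[OF G_left]])
  qed (intro linear_functional_mult_left G_left G_right)+
  then have "(\<Sum>(x,y)\<leftarrow>D a. \<Sum>(u,v)\<leftarrow>D y. G (S x * u) v) = (\<Sum>(x,y)\<leftarrow>D a. \<Sum>(u,v)\<leftarrow>D x. G (S u * v) y)"
    by (rule comult_sum_coassoc[symmetric])
  also have "\<dots> = (\<Sum>(x,y)\<leftarrow>D a. G (\<Sum>(u,v)\<leftarrow>D x. S u * v) y)"
    by (simp add: linear_functional_sum_list[OF G_left] split_def)
  also have "\<dots> = G 1 (\<Sum>(x,y)\<leftarrow>D a. sc (eps x) y)"
    by (simp add: antipode_left[unfolded split_def] dual.linear_scale[OF G_left] linear_functional_sum_list[OF G_right]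
        dual.linear_scale[OF G_right] split_def)
  finally show ?thesis by (simp add: counit_left)
qed

lemma comult_sum_antipode_right:
  assumes G: "bilinear_form sc G"
  shows "(\<Sum>(x,y)\<leftarrow>D a. \<Sum>(u,v)\<leftarrow>D x. G u (S v * y)) = G a 1"
proof -
  note G_left = bilinear_form_linear_left[OF G] and G_right = bilinear_form_linear_right[OF G]
  have "trilinear_form sc (\<lambda>u v y. G u (S v * y))"
  proof (rule trilinear_formI)
    show "linear_functional (\<lambda>v. G u (S v * y))" for u y
      by (rule linear_functional_antipode[OF linear_functional_mult_right[OF G_right]])
  qed (intro linear_functional_mult_left G_left G_right)+
  then have "(\<Sum>(x,y)\<leftarrow>D a. \<Sum>(u,v)\<leftarrow>D x. G u (S v * y)) = (\<Sum>(x,y)\<leftarrow>D a. \<Sum>(u,v)\<leftarrow>D y. G x (S u * v))"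
    by (rule comult_sum_coassoc)
  also have "\<dots> = (\<Sum>(x,y)\<leftarrow>D a. G x (\<Sum>(u,v)\<leftarrow>D y. S u * v))"
    by (simp add: linear_functional_sum_list[OF G_right] split_def)
  also have "\<dots> = G (\<Sum>(x,y)\<leftarrow>D a. sc (eps y) x) 1"
    by (simp add: antipode_left[unfolded split_def] dual.linear_scale[OF G_right] linear_functional_sum_list[OF G_left]
        dual.linear_scale[OF G_left] split_def)
  finally show ?thesis by (simp add: counit_right)
qed

end

locale lambda_integral = hopf_algebra sc D eps S
  for sc :: "'k::field \<Rightarrow> 'h::ring_1 \<Rightarrow> 'h" and D eps S +
  fixes L Lt :: 'h
  assumes Lambda_integral: "Lambda_integral_type sc D L Lt"
begin

abbreviation Psi :: "('h \<Rightarrow> 'k) \<Rightarrow> 'h" where "Psi \<nu> \<equiv> slice_left sc \<nu> (D Lt)"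
abbreviation Phi :: "('h \<Rightarrow> 'k) \<Rightarrow> 'h" where "Phi \<phi> \<equiv> slice_right sc \<phi> (D Lt)"

lemma Lt_nonzero: "Lt \<noteq> 0"
  using Lambda_integral by (simp add: Lambda_integral_type_def)

lemma lambda_integral_sum:
  assumes T: "trilinear_form sc T"
  shows "(\<Sum>(u,v)\<leftarrow>D L. T u v Lt) = (\<Sum>(x,y)\<leftarrow>D Lt. \<Sum>(u,v)\<leftarrow>D x. T u v (y * Lt))"
proof -
  have bilin: "bilinear_form sc (\<lambda>x z. \<Sum>(u,v)\<leftarrow>D x. T u v z)"
    using T unfolding trilinear_form_def
    by (intro bilinear_formI linear_functional_comult_sum linear_functional_sum_pairs) auto
  have "tens_eq sc (tens_mult (D Lt) [(1, Lt)]) [(L, Lt)]"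
    using Lambda_integral by (simp add: Lambda_integral_type_def)
  from this[unfolded tens_eq_def, rule_format, OF bilin] show ?thesis
    by (simp add: tens_mult_single o_def split_def)
qed

lemma comult_Psi_mult_Lt:
  assumes \<nu>: "linear_functional \<nu>"
  shows "tens_eq sc (tens_mult (D (Psi \<nu>)) [(1, Lt)]) [(slice_left sc \<nu> (D L), Lt)]"
  unfolding tens_eq_def
proof (intro allI impI)
  fix \<beta> assume \<beta>: "bilinear_form sc \<beta>"
  note \<beta>_left = bilinear_form_linear_left[OF \<beta>] and \<beta>_right = bilinear_form_linear_right[OF \<beta>]
  have F: "linear_functional (\<lambda>a. \<Sum>(u,v)\<leftarrow>D a. \<beta> u (v * Lt))"
    by (intro linear_functional_comult_sum bilinear_formI \<beta>_left linear_functional_mult_right \<beta>_right)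
  have T: "trilinear_form sc (\<lambda>x u v. \<nu> x * \<beta> u (v * Lt))"
    by (intro trilinear_formI linear_functional_mult_const linear_functional_const_mult \<nu> \<beta>_left
        linear_functional_mult_right \<beta>_right)
  have T': "trilinear_form sc (\<lambda>u v z. \<nu> u * \<beta> v z)"
    by (intro trilinear_formI linear_functional_mult_const linear_functional_const_mult \<nu> \<beta>_left \<beta>_right)
  have "(\<Sum>(x,y)\<leftarrow>tens_mult (D (Psi \<nu>)) [(1, Lt)]. \<beta> x y) = (\<Sum>(u,v)\<leftarrow>D (Psi \<nu>). \<beta> u (v * Lt))"
    by (simp add: tens_mult_single o_def split_def)
  also have "\<dots> = (\<Sum>(x,y)\<leftarrow>D Lt. \<nu> x * (\<Sum>(u,v)\<leftarrow>D y. \<beta> u (v * Lt)))"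
    by (rule linear_functional_slice_left[OF F])
  also have "\<dots> = (\<Sum>(x,y)\<leftarrow>D Lt. \<Sum>(u,v)\<leftarrow>D x. \<nu> u * \<beta> v (y * Lt))"
    using comult_sum_coassoc[OF T, of Lt] by (simp add: sum_list_const_mult split_def)
  also have "\<dots> = (\<Sum>(u,v)\<leftarrow>D L. \<nu> u * \<beta> v Lt)"
    by (rule lambda_integral_sum[OF T', symmetric])
  also have "\<dots> = \<beta> (slice_left sc \<nu> (D L)) Lt"
    by (rule linear_functional_slice_left[OF \<beta>_left, symmetric])
  finally show "(\<Sum>(x,y)\<leftarrow>tens_mult (D (Psi \<nu>)) [(1, Lt)]. \<beta> x y) =
      (\<Sum>(x,y)\<leftarrow>[(slice_left sc \<nu> (D L), Lt)]. \<beta> x y)" by simp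
qed

lemma tens_eq_Lt_unique:
  assumes "tens_eq sc t [(b, Lt)]" "tens_eq sc t [(b', Lt)]"
  shows "b = b'"
proof (rule linear_functional_ext)
  fix \<mu> assume \<mu>: "linear_functional \<mu>"
  obtain g where g: "linear_functional g" "g Lt = 1"
    using exists_linear_functional_eq_one[OF Lt_nonzero] by blast
  have "(\<Sum>(x,y)\<leftarrow>[(b, Lt)]. \<mu> x * g y) = (\<Sum>(x,y)\<leftarrow>[(b', Lt)]. \<mu> x * g y)"
    using assms bilinear_form_mult[OF \<mu> g(1)] unfolding tens_eq_def by metis
  with g(2) show "\<mu> b = \<mu> b'" by simp
qed

lemma hpi_Psi:
  assumes "linear_functional \<nu>"
  shows "hpi sc D Lt (Psi \<nu>) = slice_left sc \<nu> (D L)"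
  unfolding hpi_def
  by (rule the_equality) (use comult_Psi_mult_Lt[OF assms] tens_eq_Lt_unique in blast)+

text \<open>The identity (S(\<pi>(\<Psi> \<nu>)) \<otimes> 1) \<Delta>(Lt) = (1 \<otimes> \<Psi> \<nu>) \<Delta>(Lt), tested against \<mu> \<otimes> \<phi>.\<close>

lemma comult_Lt_antipode_pi_Psi:
  assumes \<nu>: "linear_functional \<nu>" and \<mu>: "linear_functional \<mu>" and \<phi>: "linear_functional \<phi>"
  shows "(\<Sum>(x,y)\<leftarrow>D Lt. \<mu> (S (slice_left sc \<nu> (D L)) * x) * \<phi> y) = (\<Sum>(x,y)\<leftarrow>D Lt. \<mu> x * \<phi> (Psi \<nu> * y))"
proof -
  define G where "G w b = (\<Sum>(c,d)\<leftarrow>D Lt. \<mu> (w * c) * \<phi> (b * d))" for w b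
  define H where "H v w = (\<Sum>(x,y)\<leftarrow>D w. \<mu> (S v * x) * \<phi> y)" for v w
  have \<mu>S: "linear_functional (\<lambda>v. \<mu> (S v * x))" for x
    by (rule linear_functional_antipode[OF linear_functional_mult_right[OF \<mu>]])
  have G: "bilinear_form sc G"
    unfolding G_def
    by (intro bilinear_formI linear_functional_sum_pairs linear_functional_mult_const
        linear_functional_const_mult linear_functional_mult_right \<mu> \<phi>)
  note G_left = bilinear_form_linear_left[OF G] and G_right = bilinear_form_linear_right[OF G]
  have H_bilin: "bilinear_form sc (\<lambda>x y. \<mu> (S v * x) * \<phi> y)" for v
    by (intro bilinear_form_mult linear_functional_mult_left \<mu> \<phi>)
  have H_Lt: "linear_functional (\<lambda>v. H v Lt)"
    unfolding H_def by (intro linear_functional_sum_pairs linear_functional_mult_const \<mu>S)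
  have T: "trilinear_form sc (\<lambda>u v w. \<nu> u * H v w)"
    unfolding H_def
    by (intro trilinear_formI linear_functional_mult_const linear_functional_const_mult \<nu>
        linear_functional_sum_pairs \<mu>S linear_functional_comult_sum H_bilin)
  have T': "trilinear_form sc (\<lambda>x u v. \<nu> x * (\<Sum>(a,b)\<leftarrow>D v. G (S u * a) b))"
  proof (rule trilinear_formI)
    show "linear_functional (\<lambda>u. \<nu> x * (\<Sum>(a,b)\<leftarrow>D v. G (S u * a) b))" for x v
      by (intro linear_functional_const_mult linear_functional_sum_pairs
          linear_functional_antipode[OF linear_functional_mult_right[OF G_left]])
  qed (intro linear_functional_mult_const linear_functional_const_mult \<nu> linear_functional_comult_sum
      bilinear_formI linear_functional_mult_left G_left G_right)+
  have H_mult: "H v (y * Lt) = (\<Sum>(a,b)\<leftarrow>D y. G (S v * a) b)" for v y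
    by (simp add: H_def G_def comult_sum_mult[OF H_bilin] mult.assoc)
  have "(\<Sum>(x,y)\<leftarrow>D Lt. \<mu> (S (slice_left sc \<nu> (D L)) * x) * \<phi> y) = H (slice_left sc \<nu> (D L)) Lt"
    by (simp add: H_def)
  also have "\<dots> = (\<Sum>(u,v)\<leftarrow>D L. \<nu> u * H v Lt)"
    by (rule linear_functional_slice_left[OF H_Lt])
  also have "\<dots> = (\<Sum>(x,y)\<leftarrow>D Lt. \<Sum>(u,v)\<leftarrow>D x. \<nu> u * (\<Sum>(a,b)\<leftarrow>D y. G (S v * a) b))"
    by (simp add: lambda_integral_sum[OF T] H_mult)
  also have "\<dots> = (\<Sum>(x,y)\<leftarrow>D Lt. \<nu> x * (\<Sum>(u,v)\<leftarrow>D y. \<Sum>(a,b)\<leftarrow>D v. G (S u * a) b))"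
    using comult_sum_coassoc[OF T', of Lt] by (simp add: sum_list_const_mult split_def)
  also have "\<dots> = (\<Sum>(x,y)\<leftarrow>D Lt. \<nu> x * G 1 y)"
    by (simp only: comult_sum_antipode_left[OF G])
  also have "\<dots> = G 1 (Psi \<nu>)"
    by (rule linear_functional_slice_left[OF G_right, symmetric])
  finally show ?thesis by (simp add: G_def)
qed

lemma antipode_hpi_mult_Phi:
  assumes \<nu>: "linear_functional \<nu>" and \<phi>: "linear_functional \<phi>"
  shows "S (hpi sc D Lt (Psi \<nu>)) * Phi \<phi> = Phi (\<lambda>b. \<phi> (Psi \<nu> * b))"
proof (rule linear_functional_ext)
  fix \<mu> assume \<mu>: "linear_functional \<mu>"
  have "\<mu> (S (hpi sc D Lt (Psi \<nu>)) * Phi \<phi>) = (\<Sum>(x,y)\<leftarrow>D Lt. \<mu> (S (slice_left sc \<nu> (D L)) * x) * \<phi> y)"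
    by (simp add: hpi_Psi[OF \<nu>] linear_functional_slice_right[OF linear_functional_mult_left[OF \<mu>]]
        mult.commute)
  also have "\<dots> = (\<Sum>(x,y)\<leftarrow>D Lt. \<mu> x * \<phi> (Psi \<nu> * y))"
    by (rule comult_Lt_antipode_pi_Psi[OF \<nu> \<mu> \<phi>])
  also have "\<dots> = \<mu> (Phi (\<lambda>b. \<phi> (Psi \<nu> * b)))"
    by (simp add: linear_functional_slice_right[OF \<mu>] mult.commute)
  finally show "\<mu> (S (hpi sc D Lt (Psi \<nu>)) * Phi \<phi>) = \<mu> (Phi (\<lambda>b. \<phi> (Psi \<nu> * b)))" .
qed

lemma Psi_mult:
  assumes \<nu>: "linear_functional \<nu>" and \<nu>': "linear_functional \<nu>'"
  shows "Psi \<nu> * Psi \<nu>' = Psi (\<lambda>x. \<nu>' (S (slice_left sc \<nu> (D L)) * x))"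
proof (rule linear_functional_ext)
  fix \<phi> assume \<phi>: "linear_functional \<phi>"
  have "\<phi> (Psi \<nu> * Psi \<nu>') = (\<Sum>(x,y)\<leftarrow>D Lt. \<nu>' x * \<phi> (Psi \<nu> * y))"
    by (rule linear_functional_slice_left[OF linear_functional_mult_left[OF \<phi>]])
  also have "\<dots> = (\<Sum>(x,y)\<leftarrow>D Lt. \<nu>' (S (slice_left sc \<nu> (D L)) * x) * \<phi> y)"
    by (rule comult_Lt_antipode_pi_Psi[OF \<nu> \<nu>' \<phi>, symmetric])
  also have "\<dots> = \<phi> (Psi (\<lambda>x. \<nu>' (S (slice_left sc \<nu> (D L)) * x)))"
    by (rule linear_functional_slice_left[OF \<phi>, symmetric])
  finally show "\<phi> (Psi \<nu> * Psi \<nu>') = \<phi> (Psi (\<lambda>x. \<nu>' (S (slice_left sc \<nu> (D L)) * x)))" .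
qed

lemma V_right_eq: "V_right sc D Lt = {Psi \<nu> | \<nu>. linear_functional \<nu>}"
  by (simp add: V_right_def dual_space_def)

lemma V_left_eq: "V_left sc D Lt = {Phi \<phi> | \<phi>. linear_functional \<phi>}"
  by (simp add: V_left_def dual_space_def)

lemma linear_functional_Phi:
  "linear_functional \<mu> \<Longrightarrow> linear_functional \<phi> \<Longrightarrow> \<mu> (Phi \<phi>) = \<phi> (Psi \<mu>)"
  by (simp add: linear_functional_slice_right linear_functional_slice_left mult.commute)

lemma Phi_eq_iff:
  assumes "linear_functional \<phi>" "linear_functional \<psi>"
  shows "Phi \<phi> = Phi \<psi> \<longleftrightarrow> (\<forall>b\<in>V_right sc D Lt. \<phi> b = \<psi> b)"
proof
  assume eq: "Phi \<phi> = Phi \<psi>"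
  show "\<forall>b\<in>V_right sc D Lt. \<phi> b = \<psi> b"
  proof
    fix b assume "b \<in> V_right sc D Lt"
    then obtain \<nu> where "linear_functional \<nu>" "b = Psi \<nu>" by (auto simp: V_right_eq)
    then show "\<phi> b = \<psi> b" using linear_functional_Phi[of \<nu>] assms eq by metis
  qed
next
  assume eq: "\<forall>b\<in>V_right sc D Lt. \<phi> b = \<psi> b"
  show "Phi \<phi> = Phi \<psi>"
  proof (rule linear_functional_ext)
    fix \<nu> assume \<nu>: "linear_functional \<nu>"
    then have "Psi \<nu> \<in> V_right sc D Lt" by (auto simp: V_right_eq)
    then show "\<nu> (Phi \<phi>) = \<nu> (Phi \<psi>)" using eq by (simp add: linear_functional_Phi[OF \<nu>] assms)
  qed
qed

lemma V_right_subspace: "subspace (V_right sc D Lt)"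
  unfolding subspace_def
proof (intro conjI ballI allI)
  have "Psi (\<lambda>_. 0) = 0" using slice_left_scale[of 0 "\<lambda>_. 0" "D Lt"] by simp
  then show "0 \<in> V_right sc D Lt" unfolding V_right_eq using dual.linear_zero by force
next
  fix x y assume "x \<in> V_right sc D Lt" "y \<in> V_right sc D Lt"
  then obtain \<nu> \<nu>' where "linear_functional \<nu>" "linear_functional \<nu>'" "x = Psi \<nu>" "y = Psi \<nu>'"
    by (auto simp: V_right_eq)
  then have "linear_functional (\<lambda>z. \<nu> z + \<nu>' z)" "x + y = Psi (\<lambda>z. \<nu> z + \<nu>' z)"
    by (simp_all add: dual.linear_compose_add slice_left_add)
  then show "x + y \<in> V_right sc D Lt" unfolding V_right_eq by blast
next
  fix c x assume "x \<in> V_right sc D Lt"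
  then obtain \<nu> where "linear_functional \<nu>" "x = Psi \<nu>" by (auto simp: V_right_eq)
  then have "linear_functional (\<lambda>z. c * \<nu> z)" "sc c x = Psi (\<lambda>z. c * \<nu> z)"
    by (simp_all add: linear_functional_const_mult slice_left_scale)
  then show "sc c x \<in> V_right sc D Lt" unfolding V_right_eq by blast
qed

lemma V_right_mult: "a \<in> V_right sc D Lt \<Longrightarrow> b \<in> V_right sc D Lt \<Longrightarrow> a * b \<in> V_right sc D Lt"
  unfolding V_right_eq using Psi_mult linear_functional_mult_left by blast

lemma V_right_subset_span: "V_right sc D Lt \<subseteq> span (snd ` set (D Lt))"
  unfolding V_right_eq using slice_left_in_span by blast

text \<open>\<Delta>(Lt) = \<Sum>_u u \<otimes> \<Psi>(\<delta> u), so its right legs lie in V_right.\<close>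

lemma comult_Lt_expansion:
  obtains U \<delta> where "finite U" "\<And>u. u \<in> U \<Longrightarrow> linear_functional (\<delta> u)"
    "\<And>\<beta>. bilinear_form sc \<beta> \<Longrightarrow> (\<Sum>(x,y)\<leftarrow>D Lt. \<beta> x y) = (\<Sum>u\<in>U. \<beta> u (Psi (\<delta> u)))"
proof -
  obtain U where U: "U \<subseteq> fst ` set (D Lt)" "independent U" "fst ` set (D Lt) \<subseteq> span U"
    using maximal_independent_subset[of "fst ` set (D Lt)"] by blast
  have fin: "finite U" using U(1) finite_subset by blast
  obtain \<delta> where \<delta>: "dual_basis U \<delta>" using dual_basis_exists[OF U(2)] .
  have "(\<Sum>(x,y)\<leftarrow>D Lt. \<beta> x y) = (\<Sum>u\<in>U. \<beta> u (Psi (\<delta> u)))" if \<beta>: "bilinear_form sc \<beta>" for \<beta>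
  proof -
    have "\<beta> x y = (\<Sum>u\<in>U. \<delta> u x * \<beta> u y)" if "(x, y) \<in> set (D Lt)" for x y
      using that U(3) linear_functional_span_expansion[OF fin \<delta> _ bilinear_form_linear_left[OF \<beta>]]
      by (force simp: image_iff)
    then have "(\<Sum>(x,y)\<leftarrow>D Lt. \<beta> x y) = (\<Sum>(x,y)\<leftarrow>D Lt. \<Sum>u\<in>U. \<delta> u x * \<beta> u y)"
      by (intro arg_cong[of _ _ sum_list] map_cong) auto
    also have "\<dots> = (\<Sum>u\<in>U. \<Sum>(x,y)\<leftarrow>D Lt. \<delta> u x * \<beta> u y)"
      unfolding split_def by (rule sum_list_sum_swap)
    also have "\<dots> = (\<Sum>u\<in>U. \<beta> u (Psi (\<delta> u)))"
      by (simp add: linear_functional_slice_left[OF bilinear_form_linear_right[OF \<beta>]])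
    finally show ?thesis .
  qed
  moreover have "linear_functional (\<delta> u)" if "u \<in> U" for u
    using \<delta> that by (simp add: dual_basis_def)
  ultimately show ?thesis using that fin by blast
qed

lemma comult_sum_right_unit:
  assumes \<gamma>: "bilinear_form sc \<gamma>" and e: "\<And>b. b \<in> V_right sc D Lt \<Longrightarrow> b * e = b"
  shows "(\<Sum>(x,y)\<leftarrow>D Lt. \<gamma> x (y * e)) = (\<Sum>(x,y)\<leftarrow>D Lt. \<gamma> x y)"
proof -
  obtain U \<delta> where U: "finite U" "\<And>u. u \<in> U \<Longrightarrow> linear_functional (\<delta> u)"
    and legs: "\<And>\<beta>. bilinear_form sc \<beta> \<Longrightarrow> (\<Sum>(x,y)\<leftarrow>D Lt. \<beta> x y) = (\<Sum>u\<in>U. \<beta> u (Psi (\<delta> u)))"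
    by (metis comult_Lt_expansion)
  have "bilinear_form sc (\<lambda>x y. \<gamma> x (y * e))"
    by (intro bilinear_formI bilinear_form_linear_left[OF \<gamma>]
        linear_functional_mult_right[OF bilinear_form_linear_right[OF \<gamma>]])
  then have "(\<Sum>(x,y)\<leftarrow>D Lt. \<gamma> x (y * e)) = (\<Sum>u\<in>U. \<gamma> u (Psi (\<delta> u) * e))"
    by (rule legs)
  also have "\<dots> = (\<Sum>u\<in>U. \<gamma> u (Psi (\<delta> u)))"
  proof (rule sum.cong[OF refl])
    fix u assume "u \<in> U"
    then have "Psi (\<delta> u) \<in> V_right sc D Lt" using U(2) by (auto simp: V_right_eq)
    then show "\<gamma> u (Psi (\<delta> u) * e) = \<gamma> u (Psi (\<delta> u))" by (simp add: e)
  qed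
  also have "\<dots> = (\<Sum>(x,y)\<leftarrow>D Lt. \<gamma> x y)"
    by (rule legs[OF \<gamma>, symmetric])
  finally show ?thesis .
qed

lemma V_right_right_unit_eq_one:
  assumes e: "\<And>b. b \<in> V_right sc D Lt \<Longrightarrow> b * e = b"
  shows "e = 1"
proof (rule linear_functional_ext)
  fix \<mu> assume \<mu>: "linear_functional \<mu>"
  obtain g where g: "linear_functional g" "g Lt = 1"
    using exists_linear_functional_eq_one[OF Lt_nonzero] by blast
  define \<gamma> where "\<gamma> x w = (\<Sum>(u,v)\<leftarrow>D x. g u * \<mu> (S v * w))" for x w
  have \<gamma>: "bilinear_form sc \<gamma>"
    unfolding \<gamma>_def
    by (intro bilinear_formI linear_functional_comult_sum bilinear_form_mult g(1)
        linear_functional_antipode linear_functional_mult_right \<mu>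
        linear_functional_sum_pairs linear_functional_const_mult linear_functional_mult_left)
  have \<gamma>_Lt: "(\<Sum>(x,y)\<leftarrow>D Lt. \<gamma> x (y * z)) = \<mu> z" for z
  proof -
    have "bilinear_form sc (\<lambda>u w. g u * \<mu> (w * z))"
      by (intro bilinear_form_mult g(1) linear_functional_mult_right \<mu>)
    from comult_sum_antipode_right[OF this, of Lt] g(2) show ?thesis
      by (simp add: \<gamma>_def mult.assoc)
  qed
  have "\<mu> e = (\<Sum>(x,y)\<leftarrow>D Lt. \<gamma> x (y * e))" by (rule \<gamma>_Lt[symmetric])
  also have "\<dots> = (\<Sum>(x,y)\<leftarrow>D Lt. \<gamma> x y)" by (rule comult_sum_right_unit[OF \<gamma> e])
  also have "\<dots> = \<mu> 1" using \<gamma>_Lt[of 1] by simp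
  finally show "\<mu> e = \<mu> 1" .
qed

lemma one_in_V_right_if_frobenius:
  assumes "frobenius sc (V_right sc D Lt)"
  shows "1 \<in> V_right sc D Lt"
proof -
  obtain e where "e \<in> V_right sc D Lt" "\<forall>b\<in>V_right sc D Lt. e * b = b \<and> b * e = b"
    using assms unfolding frobenius_def by blast
  then show ?thesis using V_right_right_unit_eq_one by metis
qed

lemma cyclic_iff_represents_dual:
  "cyclic_module (V_left sc D Lt) (V_right sc D Lt) (\<lambda>x a. S (hpi sc D Lt a) * x) \<longleftrightarrow>
    (\<exists>\<phi>. linear_functional \<phi> \<and> represents_dual (V_right sc D Lt) (\<lambda>a b. \<phi> (a * b)))"
proof -
  let ?B = "V_right sc D Lt" and ?M = "V_left sc D Lt"
  have orbit: "(\<lambda>a. S (hpi sc D Lt a) * Phi \<phi>) ` ?B = (\<lambda>a. Phi (\<lambda>b. \<phi> (a * b))) ` ?B"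
    if \<phi>: "linear_functional \<phi>" for \<phi>
  proof (rule image_cong[OF refl])
    fix a assume "a \<in> ?B"
    then obtain \<nu> where "linear_functional \<nu>" "a = Psi \<nu>" by (auto simp: V_right_eq)
    then show "S (hpi sc D Lt a) * Phi \<phi> = Phi (\<lambda>b. \<phi> (a * b))"
      using antipode_hpi_mult_Phi[OF _ \<phi>] by simp
  qed
  have generates: "(\<lambda>a. Phi (\<lambda>b. \<phi> (a * b))) ` ?B = ?M \<longleftrightarrow> represents_dual ?B (\<lambda>a b. \<phi> (a * b))"
    if \<phi>: "linear_functional \<phi>" for \<phi>
  proof
    assume eq: "(\<lambda>a. Phi (\<lambda>b. \<phi> (a * b))) ` ?B = ?M"
    show "represents_dual ?B (\<lambda>a b. \<phi> (a * b))"
      unfolding represents_dual_def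
    proof (intro allI impI)
      fix \<psi> assume \<psi>: "linear_functional \<psi>"
      then have "Phi \<psi> \<in> (\<lambda>a. Phi (\<lambda>b. \<phi> (a * b))) ` ?B" unfolding eq by (auto simp: V_left_eq)
      then obtain a where a: "a \<in> ?B" "Phi \<psi> = Phi (\<lambda>b. \<phi> (a * b))" by (rule imageE)
      then have "\<forall>b\<in>?B. \<psi> b = \<phi> (a * b)"
        using Phi_eq_iff[OF \<psi> linear_functional_mult_left[OF \<phi>]] by simp
      with a(1) show "\<exists>a\<in>?B. \<forall>b\<in>?B. \<phi> (a * b) = \<psi> b" by auto
    qed
  next
    assume rep: "represents_dual ?B (\<lambda>a b. \<phi> (a * b))"
    show "(\<lambda>a. Phi (\<lambda>b. \<phi> (a * b))) ` ?B = ?M"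
    proof
      show "(\<lambda>a. Phi (\<lambda>b. \<phi> (a * b))) ` ?B \<subseteq> ?M"
        using linear_functional_mult_left[OF \<phi>] by (auto simp: V_left_eq)
      show "?M \<subseteq> (\<lambda>a. Phi (\<lambda>b. \<phi> (a * b))) ` ?B"
      proof
        fix x assume "x \<in> ?M"
        then obtain \<psi> where \<psi>: "linear_functional \<psi>" "x = Phi \<psi>" by (auto simp: V_left_eq)
        with rep obtain a where a: "a \<in> ?B" "\<forall>b\<in>?B. \<phi> (a * b) = \<psi> b"
          unfolding represents_dual_def by blast
        then have "Phi (\<lambda>b. \<phi> (a * b)) = Phi \<psi>"
          using Phi_eq_iff[OF linear_functional_mult_left[OF \<phi>, of a] \<psi>(1)] by simp
        then have "x = Phi (\<lambda>b. \<phi> (a * b))" using \<psi>(2) by simp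
        with a(1) show "x \<in> (\<lambda>a. Phi (\<lambda>b. \<phi> (a * b))) ` ?B" by (rule rev_image_eqI)
      qed
    qed
  qed
  have "cyclic_module ?M ?B (\<lambda>x a. S (hpi sc D Lt a) * x) \<longleftrightarrow>
      (\<exists>m\<in>?M. (\<lambda>a. S (hpi sc D Lt a) * m) ` ?B = ?M)"
    by (simp add: cyclic_module_def Setcompr_eq_image)
  also have "\<dots> \<longleftrightarrow> (\<exists>\<phi>. linear_functional \<phi> \<and> (\<lambda>a. S (hpi sc D Lt a) * Phi \<phi>) ` ?B = ?M)"
    unfolding V_left_eq by blast
  also have "\<dots> \<longleftrightarrow> (\<exists>\<phi>. linear_functional \<phi> \<and> represents_dual ?B (\<lambda>a b. \<phi> (a * b)))"
  proof (rule ex_cong1)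
    fix \<phi>
    show "linear_functional \<phi> \<and> (\<lambda>a. S (hpi sc D Lt a) * Phi \<phi>) ` ?B = ?M \<longleftrightarrow>
        linear_functional \<phi> \<and> represents_dual ?B (\<lambda>a b. \<phi> (a * b))"
      by (cases "linear_functional \<phi>") (simp_all add: orbit generates)
  qed
  finally show ?thesis .
qed

end

theorem mainTheorem5:
  fixes sc :: "'k::field \<Rightarrow> 'h::ring_1 \<Rightarrow> 'h"
    and D :: "'h \<Rightarrow> ('h \<times> 'h) list"
    and eps :: "'h \<Rightarrow> 'k"
    and S :: "'h \<Rightarrow> 'h"
    and L Lt :: 'h
  assumes "hopf_algebra sc D eps S"
    and "integral_type sc D L"
    and "Lambda_integral_type sc D L Lt"
  shows "cyclic_module (V_left sc D Lt) (V_right sc D Lt) (\<lambda>x a. S (hpi sc D Lt a) * x)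
     \<longleftrightarrow> 1 \<in> V_right sc D Lt \<and> frobenius sc (V_right sc D Lt)"
proof -
  interpret lambda_integral sc D eps S L Lt
    by (rule lambda_integral.intro[OF assms(1) lambda_integral_axioms.intro[OF assms(3)]])
  obtain U where U: "finite U" "independent U" "U \<subseteq> V_right sc D Lt" "span U = V_right sc D Lt"
    by (rule finite_basis_exists[OF V_right_subspace V_right_subset_span]) simp
  have mult: "\<And>a b. a \<in> span U \<Longrightarrow> b \<in> span U \<Longrightarrow> a * b \<in> span U"
    unfolding U(4) by (rule V_right_mult)
  have "cyclic_module (V_left sc D Lt) (V_right sc D Lt) (\<lambda>x a. S (hpi sc D Lt a) * x) \<longleftrightarrow>
      (\<exists>\<phi>. linear_functional \<phi> \<and> represents_dual (V_right sc D Lt) (\<lambda>a b. \<phi> (a * b)))"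
    by (rule cyclic_iff_represents_dual)
  also have "\<dots> \<longleftrightarrow> frobenius sc (V_right sc D Lt)"
    unfolding U(4)[symmetric] by (rule frobenius_iff_represents_dual[OF U(1,2) mult, symmetric])
  also have "\<dots> \<longleftrightarrow> 1 \<in> V_right sc D Lt \<and> frobenius sc (V_right sc D Lt)"
    using one_in_V_right_if_frobenius by blast
  finally show ?thesis .
qed

end
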